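(* Let $L$ be a $\kappa$-frame and $a\in L$. Then $\mathfrak{D}_L\vee\nabla_a=\partial_{(\downarrow a)^{**}}$ in $\mathbb{C}L$.
   Context: $\kappa$ is a fixed regular cardinal; a $\kappa$-frame is a bounded distributive lattice having joins of all subsets of cardinality $<\kappa$ and satisfying the frame distributive law for such joins. A $\kappa$-ideal is a downset in which every subset of cardinality $<\kappa$ has an upper bound; $\mathfrak{H}_\kappa L$ is the frame of $\kappa$-ideals under inclusion, $\downarrow a=\{x\mid x\le a\}$, and $J^*$ denotes the pseudocomplement in $\mathfrak{H}_\kappa L$ (the largest $\kappa$-ideal $K$ with $K\cap J=\{0\}$), so $(\downarrow a)^{**}=((\downarrow a)^* )^*$. A congruence is an equivalence relation that is a sub-$\kappa$-frame of $L\times L$; $\mathbb{C}L$ is the frame of congruences under inclusion. $\nabla_a=\{(x,y)\mid x\vee a=y\vee a\}$; $\mathfrak{D}_L=\{(b,c)\mid\forall x\in L:\ b\wedge x=0\iff c\wedge x=0\}$; for a $\kappa$-ideal $I$, $\partial_I=\{(b,c)\mid\forall x\in L:\ b\wedge x\in I\iff c\wedge x\in I\}$. *)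

theory Defs
  imports Main
begin

text \<open>kappa is represented by a cardinal order relation (Card_order), assumed
regular and infinite.  The frame L is the whole carrier of a type 'a which
is a bounded distributive lattice.\<close>

definition small :: "'k rel \<Rightarrow> 'a set \<Rightarrow> bool" where
  "small \<kappa> A \<longleftrightarrow> (card_of A, \<kappa>) \<in> ordLess"

definition is_lub :: "'a::order set \<Rightarrow> 'a \<Rightarrow> bool" where
  "is_lub A s \<longleftrightarrow> (\<forall>x\<in>A. x \<le> s) \<and> (\<forall>u. (\<forall>x\<in>A. x \<le> u) \<longrightarrow> s \<le> u)"

definition lub :: "'a::order set \<Rightarrow> 'a" where
  "lub A = (THE s. is_lub A s)"

definition kframe :: "'k rel \<Rightarrow> ('a::{bounded_lattice,distrib_lattice}) itself \<Rightarrow> bool" where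
  "kframe \<kappa> _ \<longleftrightarrow> (\<forall>A::'a set. small \<kappa> A \<longrightarrow>
      (\<exists>s. is_lub A s) \<and> (\<forall>a. inf a (lub A) = lub ((\<lambda>x. inf a x) ` A)))"

definition kideal :: "'k rel \<Rightarrow> 'a::{bounded_lattice,distrib_lattice} set \<Rightarrow> bool" where
  "kideal \<kappa> I \<longleftrightarrow> (\<forall>x y. y \<in> I \<and> x \<le> y \<longrightarrow> x \<in> I) \<and>
     (\<forall>A. A \<subseteq> I \<and> small \<kappa> A \<longrightarrow> (\<exists>u\<in>I. \<forall>x\<in>A. x \<le> u))"

definition downset :: "'a::order \<Rightarrow> 'a set" where
  "downset a = {x. x \<le> a}"

text \<open>Pseudocomplement in the frame of kappa-ideals: the largest kappa-ideal K
with K \<inter> J = {0}.\<close>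
definition ipc :: "'k rel \<Rightarrow> 'a::{bounded_lattice,distrib_lattice} set \<Rightarrow> 'a set" where
  "ipc \<kappa> J = (GREATEST K. kideal \<kappa> K \<and> K \<inter> J = {bot})"

definition congruence :: "'k rel \<Rightarrow> ('a::{bounded_lattice,distrib_lattice} \<times> 'a) set \<Rightarrow> bool" where
  "congruence \<kappa> \<theta> \<longleftrightarrow> equiv UNIV \<theta> \<and>
     (top, top) \<in> \<theta> \<and>
     (\<forall>a b c d. (a, b) \<in> \<theta> \<and> (c, d) \<in> \<theta> \<longrightarrow> (inf a c, inf b d) \<in> \<theta>) \<and>
     (\<forall>S. S \<subseteq> \<theta> \<and> small \<kappa> S \<longrightarrow> (lub (fst ` S), lub (snd ` S)) \<in> \<theta>)"

definition cjoin :: "'k rel \<Rightarrow> ('a::{bounded_lattice,distrib_lattice} \<times> 'a) set \<Rightarrow> ('a \<times> 'a) set \<Rightarrow> ('a \<times> 'a) set" where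
  "cjoin \<kappa> \<theta> \<psi> = \<Inter>{C. congruence \<kappa> C \<and> \<theta> \<union> \<psi> \<subseteq> C}"

definition nablaC :: "'a::lattice \<Rightarrow> ('a \<times> 'a) set" where
  "nablaC a = {(x, y). sup x a = sup y a}"

definition DC :: "('a::bounded_lattice \<times> 'a) set" where
  "DC = {(b, c). \<forall>x. inf b x = bot \<longleftrightarrow> inf c x = bot}"

definition partialC :: "'a::lattice set \<Rightarrow> ('a \<times> 'a) set" where
  "partialC I = {(b, c). \<forall>x. inf b x \<in> I \<longleftrightarrow> inf c x \<in> I}"

end

theory Submission
  imports Defs
begin

text \<open>In a frame the pseudocomplement of a down-closed set J is its annihilator, so
  (\<down>a)** = ann (ann (\<down>a)).  For every kappa-ideal I the relation \<partial>_I is a congruence,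
  and when I is this double annihilator it contains both D and \<nabla>_a.  Conversely, if
  (b, c) is in \<partial>_I then b \<nabla>_a b \<squnion> a, b \<squnion> a D c \<squnion> a and c \<squnion> a \<nabla>_a c: for x with
  x \<sqinter> a = 0 we have x \<in> (\<down>a)*, so b \<sqinter> x \<in> I just means b \<sqinter> x = 0, while for every
  other x both (b \<squnion> a) \<sqinter> x and (c \<squnion> a) \<sqinter> x are nonzero.\<close>

definition ann :: "'a::bounded_lattice set \<Rightarrow> 'a set" where
  "ann J = {y. \<forall>x\<in>J. inf y x = bot}"

lemma inf_eq_bot_antimono:
  fixes x y z :: "'a::bounded_lattice"
  assumes "x \<le> y" "inf y z = bot"
  shows "inf x z = bot"
  using assms by (metis bot.extremum_uniqueI inf_mono order_refl)

lemma ann_down_closed: "y \<in> ann J \<Longrightarrow> x \<le> y \<Longrightarrow> x \<in> ann J"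
  unfolding ann_def using inf_eq_bot_antimono by blast

lemma bot_mem_ann: "bot \<in> ann J"
  unfolding ann_def by simp

lemma small_image: "small \<kappa> A \<Longrightarrow> small \<kappa> (f ` A)"
  unfolding small_def using card_of_image ordLeq_ordLess_trans by blast

lemma kframe_is_lub:
  fixes A :: "'a::{bounded_lattice,distrib_lattice} set"
  assumes "kframe \<kappa> TYPE('a)" "small \<kappa> A"
  shows "is_lub A (lub A)"
proof -
  obtain s where s: "is_lub A s" using assms unfolding kframe_def by blast
  have "lub A = s" unfolding lub_def
    by (rule the_equality[where P="is_lub A", OF s]) (meson s antisym is_lub_def)
  with s show ?thesis by simp
qed

lemma kideal_lub_iff:
  fixes A :: "'a::{bounded_lattice,distrib_lattice} set"
  assumes k: "kframe \<kappa> TYPE('a)" and I: "kideal \<kappa> I" and sm: "small \<kappa> A"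
  shows "lub A \<in> I \<longleftrightarrow> A \<subseteq> I"
proof
  assume "lub A \<in> I"
  with I kframe_is_lub[OF k sm] show "A \<subseteq> I" unfolding kideal_def is_lub_def by blast
next
  assume "A \<subseteq> I"
  with I sm obtain u where "u \<in> I" "\<forall>x\<in>A. x \<le> u" unfolding kideal_def by blast
  with I kframe_is_lub[OF k sm] show "lub A \<in> I" unfolding kideal_def is_lub_def by blast
qed

lemma inf_lub_mem_kideal_iff:
  fixes A :: "'a::{bounded_lattice,distrib_lattice} set"
  assumes k: "kframe \<kappa> TYPE('a)" and I: "kideal \<kappa> I" and sm: "small \<kappa> A"
  shows "inf (lub A) x \<in> I \<longleftrightarrow> (\<forall>y\<in>A. inf y x \<in> I)"
proof -
  have "inf x (lub A) = lub ((\<lambda>y. inf x y) ` A)"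
    using k sm unfolding kframe_def by blast
  then have "inf (lub A) x = lub ((\<lambda>y. inf y x) ` A)"
    by (simp only: inf_commute)
  with kideal_lub_iff[OF k I small_image[OF sm]] show ?thesis
    by (simp add: image_subset_iff)
qed

lemma kideal_bot: "kideal \<kappa> {bot}"
  unfolding kideal_def by (auto simp: bot_unique)

lemma kideal_ann:
  assumes k: "kframe \<kappa> TYPE('a::{bounded_lattice,distrib_lattice})"
  shows "kideal \<kappa> (ann (J :: 'a set))"
  unfolding kideal_def
proof (intro conjI allI impI)
  fix x y :: 'a assume "y \<in> ann J \<and> x \<le> y"
  then show "x \<in> ann J" using ann_down_closed by blast
next
  fix A assume A: "A \<subseteq> ann J \<and> small \<kappa> A"
  then have "lub A \<in> ann J"
    using inf_lub_mem_kideal_iff[OF k kideal_bot] unfolding ann_def by blast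
  with kframe_is_lub[OF k] A show "\<exists>u\<in>ann J. \<forall>x\<in>A. x \<le> u" unfolding is_lub_def by blast
qed

lemma ipc_eq_ann:
  fixes J :: "'a::{bounded_lattice,distrib_lattice} set"
  assumes k: "kframe \<kappa> TYPE('a)" and "bot \<in> J"
    and down: "\<And>x y. y \<in> J \<Longrightarrow> x \<le> y \<Longrightarrow> x \<in> J"
  shows "ipc \<kappa> J = ann J"
  unfolding ipc_def
proof (rule Greatest_equality)
  have "ann J \<inter> J = {bot}" using \<open>bot \<in> J\<close> unfolding ann_def by auto
  with kideal_ann[OF k] show "kideal \<kappa> (ann J) \<and> ann J \<inter> J = {bot}" by blast
next
  fix K assume K: "kideal \<kappa> K \<and> K \<inter> J = {bot}"
  show "K \<subseteq> ann J"
  proof (intro subsetI, unfold ann_def, intro CollectI ballI)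
    fix y x assume "y \<in> K" "x \<in> J"
    with K down have "inf y x \<in> K" "inf y x \<in> J" unfolding kideal_def by (meson inf_le1 inf_le2)+
    with K show "inf y x = bot" by blast
  qed
qed

lemma ann_downset: "ann (downset a) = {y. inf y a = bot}"
proof -
  have "inf y x = bot" if "inf y a = bot" "x \<le> a" for y x
    using inf_eq_bot_antimono[OF that(2), of y] that(1) by (simp add: inf_commute)
  then show ?thesis unfolding ann_def downset_def by auto
qed

lemma ipc_ipc_downset:
  assumes k: "kframe \<kappa> TYPE('a::{bounded_lattice,distrib_lattice})"
  shows "ipc \<kappa> (ipc \<kappa> (downset (a :: 'a))) = ann (ann (downset a))"
proof -
  have "ipc \<kappa> (downset a) = ann (downset a)"
    by (rule ipc_eq_ann[OF k]) (auto simp: downset_def)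
  moreover have "ipc \<kappa> (ann (downset a)) = ann (ann (downset a))"
    by (rule ipc_eq_ann[OF k]) (auto intro: bot_mem_ann ann_down_closed)
  ultimately show ?thesis by simp
qed

lemma congruence_partialC:
  fixes I :: "'a::{bounded_lattice,distrib_lattice} set"
  assumes k: "kframe \<kappa> TYPE('a)" and I: "kideal \<kappa> I"
  shows "congruence \<kappa> (partialC I)"
  unfolding congruence_def
proof (intro conjI allI impI)
  show "equiv UNIV (partialC I)"
    unfolding equiv_def refl_on_def sym_def trans_def partialC_def by auto
  show "(top, top) \<in> partialC I" unfolding partialC_def by auto
next
  fix p q r s assume h: "(p, q) \<in> partialC I \<and> (r, s) \<in> partialC I"
  have "inf (inf p r) x \<in> I \<longleftrightarrow> inf (inf q s) x \<in> I" for x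
  proof -
    have "inf (inf p r) x \<in> I \<longleftrightarrow> inf p (inf r x) \<in> I" by (simp add: inf_assoc)
    also have "\<dots> \<longleftrightarrow> inf q (inf r x) \<in> I" using h unfolding partialC_def by blast
    also have "inf q (inf r x) = inf r (inf q x)" by (simp add: inf_left_commute)
    also have "\<dots> \<in> I \<longleftrightarrow> inf s (inf q x) \<in> I" using h unfolding partialC_def by blast
    also have "inf s (inf q x) = inf (inf q s) x" by (simp add: inf_assoc inf_left_commute)
    finally show ?thesis .
  qed
  then show "(inf p r, inf q s) \<in> partialC I" unfolding partialC_def by simp
next
  fix S assume S: "S \<subseteq> partialC I \<and> small \<kappa> S"
  have "inf (lub (fst ` S)) x \<in> I \<longleftrightarrow> inf (lub (snd ` S)) x \<in> I" for x
  proof -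
    have "(\<forall>y\<in>fst ` S. inf y x \<in> I) \<longleftrightarrow> (\<forall>y\<in>snd ` S. inf y x \<in> I)"
      using S unfolding partialC_def by fastforce
    with S show ?thesis by (simp add: inf_lub_mem_kideal_iff[OF k I] small_image)
  qed
  then show "(lub (fst ` S), lub (snd ` S)) \<in> partialC I" unfolding partialC_def by simp
qed

lemma DC_subset_partialC_ann: "DC \<subseteq> partialC (ann S)"
  unfolding DC_def partialC_def ann_def by (auto simp: inf_assoc)

lemma inf_sup_disjoint:
  fixes a :: "'a::{bounded_lattice,distrib_lattice}"
  assumes "inf s a = bot"
  shows "inf (inf (sup b a) x) s = inf (inf b x) s"
proof -
  have "inf (inf a x) s = bot"
    using assms by (metis inf_assoc inf_bot_left inf_commute)
  then show ?thesis by (simp add: inf_sup_distrib2)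
qed

lemma nablaC_subset_partialC_ann:
  fixes a :: "'a::{bounded_lattice,distrib_lattice}"
  assumes "\<forall>s\<in>S. inf s a = bot"
  shows "nablaC a \<subseteq> partialC (ann S)"
proof (clarsimp simp: nablaC_def partialC_def ann_def)
  fix b c x assume "sup b a = sup c a"
  with assms show "(\<forall>s\<in>S. inf (inf b x) s = bot) \<longleftrightarrow> (\<forall>s\<in>S. inf (inf c x) s = bot)"
    by (metis inf_sup_disjoint)
qed

lemma partialC_subset_relcomp:
  fixes a :: "'a::{bounded_lattice,distrib_lattice}"
  shows "partialC (ann (ann (downset a))) \<subseteq> nablaC a O DC O nablaC a"
proof (clarsimp simp: partialC_def)
  fix b c :: 'a
  assume hb: "\<forall>x. inf b x \<in> ann (ann (downset a)) \<longleftrightarrow> inf c x \<in> ann (ann (downset a))"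
  have "inf (sup b a) x = bot \<longleftrightarrow> inf (sup c a) x = bot" for x
  proof (cases "inf x a = bot")
    case True
    have "inf p x \<in> ann (ann (downset a)) \<longleftrightarrow> inf p x = bot" for p
    proof
      assume "inf p x \<in> ann (ann (downset a))"
      then have "inf p x \<in> ann {y. inf y a = bot}" by (simp only: ann_downset)
      with True have "inf (inf p x) x = bot" unfolding ann_def by blast
      then show "inf p x = bot" by (simp add: inf_assoc)
    qed (simp add: bot_mem_ann)
    with hb have "inf b x = bot \<longleftrightarrow> inf c x = bot" by blast
    moreover have "inf a x = bot" using True by (simp add: inf_commute)
    ultimately show ?thesis by (simp add: inf_sup_distrib2)
  next
    case False
    have "inf (sup p a) x \<noteq> bot" for p
    proof
      assume "inf (sup p a) x = bot"
      then have "inf a x = bot" by (rule inf_eq_bot_antimono[rotated]) simp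
      with False show False by (simp add: inf_commute)
    qed
    then show ?thesis by blast
  qed
  then have "(sup b a, sup c a) \<in> DC" unfolding DC_def by simp
  moreover have "(b, sup b a) \<in> nablaC a" "(sup c a, c) \<in> nablaC a"
    unfolding nablaC_def by (simp_all add: sup_assoc)
  ultimately show "(b, c) \<in> nablaC a O DC O nablaC a" by blast
qed

lemma cjoin_eqI:
  assumes "congruence \<kappa> \<Theta>" and "\<theta> \<union> \<psi> \<subseteq> \<Theta>"
    and "\<And>C. congruence \<kappa> C \<Longrightarrow> \<theta> \<union> \<psi> \<subseteq> C \<Longrightarrow> \<Theta> \<subseteq> C"
  shows "cjoin \<kappa> \<theta> \<psi> = \<Theta>"
  unfolding cjoin_def using assms by (intro antisym Inter_lower Inter_greatest) auto

theorem mainTheorem18: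
  fixes \<kappa> :: "'k rel" and a :: "'a::{bounded_lattice,distrib_lattice}"
  assumes "Card_order \<kappa>" and "Cinfinite \<kappa>" and "regularCard \<kappa>"
    and "kframe \<kappa> TYPE('a)"
  shows "cjoin \<kappa> DC (nablaC a) = partialC (ipc \<kappa> (ipc \<kappa> (downset a)))"
  unfolding ipc_ipc_downset[OF assms(4)]
proof (rule cjoin_eqI)
  show "congruence \<kappa> (partialC (ann (ann (downset a))))"
    by (rule congruence_partialC[OF assms(4) kideal_ann[OF assms(4)]])
  show "DC \<union> nablaC a \<subseteq> partialC (ann (ann (downset a)))"
    using DC_subset_partialC_ann nablaC_subset_partialC_ann[of "ann (downset a)" a]
    by (auto simp: ann_downset)
next
  fix C assume C: "congruence \<kappa> C" "DC \<union> nablaC a \<subseteq> C"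
  then have "trans C" unfolding congruence_def equiv_def by blast
  with C have "nablaC a O DC O nablaC a \<subseteq> C" by (blast dest: transD)
  with partialC_subset_relcomp show "partialC (ann (ann (downset a))) \<subseteq> C" by blast
qed

end
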